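(* Let $R$ be a Dedekind domain and $I$ a non-principal ideal of $R$ such that $I\cong I^{-1}$ as $R$-modules. Let $A=M_2(R)$. Then ${}_A\mathrm{Hom}_R(A,I)\cong{}_AA$ as left $A$-modules.
   Context: The left $A$-module structure on $\mathrm{Hom}_R(A,I)$ is $(af)(x)=f(xa)$. *)

theory Defs
  imports "HOL-Analysis.Analysis" "HOL-Computational_Algebra.Polynomial"
    "HOL-Computational_Algebra.Fraction_Field"
begin

definition is_ideal :: "'a::comm_ring_1 set \<Rightarrow> bool" where
  "is_ideal I \<longleftrightarrow> 0 \<in> I \<and> (\<forall>x\<in>I. \<forall>y\<in>I. x + y \<in> I) \<and> (\<forall>r. \<forall>x\<in>I. r * x \<in> I)"

definition principal_ideal :: "'a::comm_ring_1 set \<Rightarrow> bool" where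
  "principal_ideal I \<longleftrightarrow> (\<exists>a. I = {a * r | r. True})"

definition finitely_generated_ideal :: "'a::comm_ring_1 set \<Rightarrow> bool" where
  "finitely_generated_ideal I \<longleftrightarrow>
     (\<exists>F. finite F \<and> I = {x. \<exists>c. x = (\<Sum>a\<in>F. c a * a)})"

definition is_prime_ideal :: "'a::comm_ring_1 set \<Rightarrow> bool" where
  "is_prime_ideal P \<longleftrightarrow> is_ideal P \<and> P \<noteq> UNIV \<and> (\<forall>a b. a * b \<in> P \<longrightarrow> a \<in> P \<or> b \<in> P)"

definition is_maximal_ideal :: "'a::comm_ring_1 set \<Rightarrow> bool" where
  "is_maximal_ideal M \<longleftrightarrow> is_ideal M \<and> M \<noteq> UNIV \<and>
     (\<forall>J. is_ideal J \<and> M \<subseteq> J \<longrightarrow> J = M \<or> J = UNIV)"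

definition frac_emb :: "'a::idom \<Rightarrow> 'a fract" where
  "frac_emb r = Fract r 1"

definition noetherian_ring_cls :: "'a::comm_ring_1 itself \<Rightarrow> bool" where
  "noetherian_ring_cls _ \<longleftrightarrow> (\<forall>I::'a set. is_ideal I \<longrightarrow> finitely_generated_ideal I)"

definition integrally_closed :: "'a::idom itself \<Rightarrow> bool" where
  "integrally_closed _ \<longleftrightarrow>
     (\<forall>x::'a fract. (\<exists>p::'a poly. lead_coeff p = 1 \<and> poly (map_poly frac_emb p) x = 0)
        \<longrightarrow> x \<in> range frac_emb)"

definition dedekind_domain :: "'a::idom itself \<Rightarrow> bool" where
  "dedekind_domain T \<longleftrightarrow> noetherian_ring_cls T \<and> integrally_closed T \<and>
     (\<forall>P::'a set. is_prime_ideal P \<and> P \<noteq> {0} \<longrightarrow> is_maximal_ideal P)"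

definition ideal_inverse :: "'a::idom set \<Rightarrow> 'a fract set" where
  "ideal_inverse I = {x. \<forall>i\<in>I. x * frac_emb i \<in> range frac_emb}"

definition ideal_iso_frac :: "'a::idom set \<Rightarrow> 'a fract set \<Rightarrow> bool" where
  "ideal_iso_frac I J \<longleftrightarrow> (\<exists>\<phi> :: 'a \<Rightarrow> 'a fract. bij_betw \<phi> I J \<and>
      (\<forall>x\<in>I. \<forall>y\<in>I. \<phi> (x + y) = \<phi> x + \<phi> y) \<and>
      (\<forall>r. \<forall>x\<in>I. \<phi> (r * x) = frac_emb r * \<phi> x))"

definition mscale :: "'a::comm_ring_1 \<Rightarrow> 'a^2^2 \<Rightarrow> 'a^2^2" where
  "mscale r X = (\<chi> i j. r * X$i$j)"

definition hom_R_A :: "'a::comm_ring_1 set \<Rightarrow> ('a^2^2 \<Rightarrow> 'a) set" where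
  "hom_R_A I = {f. (\<forall>x y. f (x + y) = f x + f y) \<and> (\<forall>r x. f (mscale r x) = r * f x)
                   \<and> (\<forall>x. f x \<in> I)}"

definition hom_act :: "'a::comm_ring_1^2^2 \<Rightarrow> ('a^2^2 \<Rightarrow> 'a) \<Rightarrow> ('a^2^2 \<Rightarrow> 'a)" where
  "hom_act a f = (\<lambda>x. f (x ** a))"

definition hom_iso_regular :: "'a::comm_ring_1 set \<Rightarrow> bool" where
  "hom_iso_regular I \<longleftrightarrow> (\<exists>\<Phi> :: ('a^2^2 \<Rightarrow> 'a) \<Rightarrow> 'a^2^2.
      bij_betw \<Phi> (hom_R_A I) UNIV \<and>
      (\<forall>f\<in>hom_R_A I. \<forall>g\<in>hom_R_A I. \<Phi> (\<lambda>x. f x + g x) = \<Phi> f + \<Phi> g) \<and>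
      (\<forall>a. \<forall>f\<in>hom_R_A I. \<Phi> (hom_act a f) = a ** \<Phi> f))"

end

(* Every nonzero ideal I of a Dedekind domain R is invertible, and for any nonzero a in I there
   is b in I with a I^-1 + b I^-1 = R, say a u1 + b u2 = 1 with u1, u2 in I^-1.  Pulling u1, u2
   back along an isomorphism phi : I -> I^-1 gives y1, y2 in I with phi yk = uk; since
   x phi(y) = phi(x y) = y phi(x) for x, y in I, the matrices G = [[a, b], [-y2, y1]] over I and
   H = [[u1, -phi b], [u2, phi a]] over I^-1 satisfy G H = 1.
   On the other hand f |-> (f (E_ji))_ij identifies Hom_R(A, I) with M_2(I), the action of A
   becoming left multiplication.  Right multiplication by H then maps M_2(I) A-linearly onto A,
   with inverse right multiplication by G.  Non-principality of I is only used to know I <> 0. *)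

theory Submission
  imports Defs
begin

lemma ideal_0: "is_ideal I \<Longrightarrow> 0 \<in> I"
  by (simp add: is_ideal_def)

lemma ideal_add: "is_ideal I \<Longrightarrow> x \<in> I \<Longrightarrow> y \<in> I \<Longrightarrow> x + y \<in> I"
  by (simp add: is_ideal_def)

lemma ideal_mult_left: "is_ideal I \<Longrightarrow> x \<in> I \<Longrightarrow> r * x \<in> I"
  by (simp add: is_ideal_def)

lemma ideal_mult_right: "is_ideal I \<Longrightarrow> x \<in> I \<Longrightarrow> x * r \<in> I"
  using ideal_mult_left[of I x r] by (simp add: mult.commute)

lemma ideal_uminus: "is_ideal I \<Longrightarrow> x \<in> I \<Longrightarrow> - x \<in> I"
  using ideal_mult_left[of I x "-1"] by simp

lemma ideal_sum: "is_ideal I \<Longrightarrow> (\<And>a. a \<in> A \<Longrightarrow> f a \<in> I) \<Longrightarrow> sum f A \<in> I"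
  by (induction A rule: infinite_finite_induct) (auto simp: ideal_0 ideal_add)

lemma ideal_eq_UNIV_iff: "is_ideal I \<Longrightarrow> I = UNIV \<longleftrightarrow> 1 \<in> I"
  using ideal_mult_right[of I 1] by auto

lemma ideal_add_left_cancel: "is_ideal I \<Longrightarrow> x + y \<in> I \<Longrightarrow> y \<in> I \<Longrightarrow> x \<in> I"
  using ideal_add[of I "x + y" "- y"] ideal_uminus[of I y] by simp

lemma is_ideal_singleton_0: "is_ideal {0}"
  by (simp add: is_ideal_def)

lemma finitely_generated_ideal_generator:
  fixes a :: "'a::comm_ring_1"
  assumes "I = {x. \<exists>c. x = (\<Sum>a\<in>F. c a * a)}" "finite F" "a \<in> F"
  shows "a \<in> I"
proof -
  have "(\<Sum>b\<in>F. (if b = a then 1 else 0) * b) = (\<Sum>b\<in>F. if b = a then b else 0)"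
    by (rule sum.cong) auto
  also have "\<dots> = a"
    using assms(2,3) by simp
  finally show ?thesis
    unfolding assms(1) by (intro CollectI exI[of _ "\<lambda>b. if b = a then 1 else 0"]) simp
qed

definition ideal_insert :: "'a::comm_ring_1 \<Rightarrow> 'a set \<Rightarrow> 'a set" where
  "ideal_insert c J = {j + c * r | j r. j \<in> J}"

lemma ideal_insertI: "j \<in> J \<Longrightarrow> j + c * r \<in> ideal_insert c J"
  unfolding ideal_insert_def by blast

lemma ideal_insertE:
  assumes "x \<in> ideal_insert c J"
  obtains j r where "j \<in> J" "x = j + c * r"
  using assms unfolding ideal_insert_def by blast

lemma is_ideal_ideal_insert:
  assumes "is_ideal J"
  shows "is_ideal (ideal_insert c J)"
  unfolding is_ideal_def
proof (intro conjI ballI allI)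
  show "0 \<in> ideal_insert c J"
    using ideal_insertI[OF ideal_0[OF assms], of c 0] by simp
next
  fix x y assume "x \<in> ideal_insert c J" "y \<in> ideal_insert c J"
  then obtain j1 r1 j2 r2 where "x = j1 + c * r1" "y = j2 + c * r2" "j1 \<in> J" "j2 \<in> J"
    by (metis ideal_insertE)
  then have "x + y = (j1 + j2) + c * (r1 + r2)" "j1 + j2 \<in> J"
    using ideal_add[OF assms] by (auto simp: algebra_simps)
  then show "x + y \<in> ideal_insert c J"
    by (simp add: ideal_insertI)
next
  fix s x assume "x \<in> ideal_insert c J"
  then obtain j r where "x = j + c * r" "j \<in> J"
    by (metis ideal_insertE)
  then have "s * x = s * j + c * (s * r)" "s * j \<in> J"
    using ideal_mult_left[OF assms] by (auto simp: algebra_simps)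
  then show "s * x \<in> ideal_insert c J"
    by (simp add: ideal_insertI)
qed

lemma subset_ideal_insert: "J \<subseteq> ideal_insert c J"
  using ideal_insertI[of _ J c 0] by auto

lemma insert_in_ideal_insert: "is_ideal J \<Longrightarrow> c \<in> ideal_insert c J"
  using ideal_insertI[OF ideal_0, of J c 1] by simp

lemma maximal_ideal_is_prime:
  assumes "is_maximal_ideal M"
  shows "is_prime_ideal M"
  unfolding is_prime_ideal_def
proof (intro conjI allI impI)
  show M: "is_ideal M" "M \<noteq> UNIV"
    using assms by (auto simp: is_maximal_ideal_def)
  fix a b assume ab: "a * b \<in> M"
  show "a \<in> M \<or> b \<in> M"
  proof (cases "a \<in> M")
    case False
    have "ideal_insert a M = M \<or> ideal_insert a M = UNIV"
      using assms is_ideal_ideal_insert[OF M(1), of a] subset_ideal_insert[of M a]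
      unfolding is_maximal_ideal_def by blast
    then have "ideal_insert a M = UNIV"
      using insert_in_ideal_insert[OF M(1), of a] False by auto
    then obtain m r where "m \<in> M" "m + a * r = 1"
      by (metis UNIV_I ideal_insertE)
    then have "b = (m + a * r) * b"
      by simp
    also have "\<dots> = m * b + (a * b) * r"
      by (simp add: algebra_simps)
    also have "\<dots> \<in> M"
      using ideal_add[OF M(1)] ideal_mult_right[OF M(1)] \<open>m \<in> M\<close> ab by simp
    finally show ?thesis ..
  qed simp
qed

section \<open>Noetherian rings\<close>

definition ideal_psupset :: "('a::comm_ring_1 set \<times> 'a set) set" where
  "ideal_psupset = {(J', J). is_ideal J \<and> is_ideal J' \<and> J \<subset> J'}"

lemma is_ideal_Union_chain:
  fixes f :: "nat \<Rightarrow> 'a::comm_ring_1 set"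
  assumes ideal: "\<And>i. is_ideal (f i)" and mono: "\<And>i j. i \<le> j \<Longrightarrow> f i \<subseteq> f j"
  shows "is_ideal (\<Union>(range f))"
  unfolding is_ideal_def
proof (intro conjI ballI allI)
  show "0 \<in> \<Union>(range f)"
    using ideal_0[OF ideal] by blast
next
  fix x y assume "x \<in> \<Union>(range f)" "y \<in> \<Union>(range f)"
  then obtain i j where "x \<in> f i" "y \<in> f j"
    by blast
  then have "x \<in> f (max i j)" "y \<in> f (max i j)"
    using mono[of i "max i j"] mono[of j "max i j"] by auto
  then show "x + y \<in> \<Union>(range f)"
    using ideal_add[OF ideal] by blast
next
  fix r x assume "x \<in> \<Union>(range f)"
  then show "r * x \<in> \<Union>(range f)"
    using ideal_mult_left[OF ideal] by blast
qed

lemma wf_ideal_psupset: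
  assumes "noetherian_ring_cls TYPE('a::comm_ring_1)"
  shows "wf (ideal_psupset :: ('a set \<times> 'a set) set)"
proof (subst wf_iff_no_infinite_down_chain, rule notI)
  assume "\<exists>f. \<forall>i. (f (Suc i), f i) \<in> (ideal_psupset :: ('a set \<times> 'a set) set)"
  then obtain f :: "nat \<Rightarrow> 'a set" where f: "\<And>i. (f (Suc i), f i) \<in> ideal_psupset"
    by blast
  have ideal: "is_ideal (f i)" and less: "f i \<subset> f (Suc i)" for i
    using f[of i] by (auto simp: ideal_psupset_def)
  have mono: "i \<le> j \<Longrightarrow> f i \<subseteq> f j" for i j
    by (rule lift_Suc_mono_le[of f]) (use less in auto)
  define U where "U = \<Union>(range f)"
  have "is_ideal U"
    unfolding U_def using ideal mono by (rule is_ideal_Union_chain)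
  then obtain F where F: "finite F" "U = {x. \<exists>c. x = (\<Sum>a\<in>F. c a * a)}"
    using assms unfolding noetherian_ring_cls_def finitely_generated_ideal_def by blast
  have "\<forall>a\<in>F. \<exists>n. a \<in> f n"
    using finitely_generated_ideal_generator[OF F(2,1)] by (auto simp: U_def)
  then obtain n where n: "\<forall>a\<in>F. a \<in> f (n a)"
    by metis
  define N where "N = Max (n ` F)"
  have "a \<in> f N" if "a \<in> F" for a
    using n that mono[of "n a" N] F(1) by (auto simp: N_def)
  then have "U \<subseteq> f N"
    unfolding F(2) by (auto intro!: ideal_sum[OF ideal] ideal_mult_left[OF ideal])
  moreover have "f (Suc N) \<subseteq> U"
    by (auto simp: U_def)
  ultimately show False
    using less[of N] by auto
qed

lemma exists_maximal_ideal:
  assumes "noetherian_ring_cls TYPE('a::comm_ring_1)"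
  shows "is_ideal (J::'a set) \<Longrightarrow> J \<noteq> UNIV \<Longrightarrow> \<exists>M. is_maximal_ideal M \<and> J \<subseteq> M"
proof (induction J rule: wf_induct[OF wf_ideal_psupset[OF assms]])
  case (1 J)
  show ?case
  proof (cases "is_maximal_ideal J")
    case False
    then obtain J' where "is_ideal J'" "J \<subset> J'" "J' \<noteq> UNIV"
      using 1 unfolding is_maximal_ideal_def by blast
    then have "(J', J) \<in> ideal_psupset"
      using 1(2) by (simp add: ideal_psupset_def)
    then show ?thesis
      using 1(1) \<open>is_ideal J'\<close> \<open>J' \<noteq> UNIV\<close> \<open>J \<subset> J'\<close> by blast
  qed blast
qed

text \<open>\<open>ideal_prod_subset Ps J\<close> encodes \<open>P\<^sub>1 \<cdots> P\<^sub>n \<subseteq> J\<close> by testing the products of one element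
  from each factor, which generate the product ideal.\<close>

definition ideal_prod_subset :: "'a::comm_ring_1 set list \<Rightarrow> 'a set \<Rightarrow> bool" where
  "ideal_prod_subset Ps J \<longleftrightarrow> (\<forall>xs. list_all2 (\<in>) xs Ps \<longrightarrow> prod_list xs \<in> J)"

lemma ideal_prod_subset_mono: "ideal_prod_subset Ps J \<Longrightarrow> J \<subseteq> J' \<Longrightarrow> ideal_prod_subset Ps J'"
  unfolding ideal_prod_subset_def by blast

lemma prime_ideal_contains_factor:
  assumes "is_prime_ideal P" "ideal_prod_subset Ps P"
  shows "\<exists>Q\<in>set Ps. Q \<subseteq> P"
  using assms(2)
proof (induction Ps)
  case Nil
  then have "1 \<in> P"
    unfolding ideal_prod_subset_def by force
  then show ?case
    using assms(1) ideal_eq_UNIV_iff unfolding is_prime_ideal_def by blast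
next
  case (Cons Q Ps)
  show ?case
  proof (cases "Q \<subseteq> P")
    case False
    then obtain q where q: "q \<in> Q" "q \<notin> P" by auto
    have "ideal_prod_subset Ps P"
      unfolding ideal_prod_subset_def
    proof (intro allI impI)
      fix xs assume "list_all2 (\<in>) xs Ps"
      then have "list_all2 (\<in>) (q # xs) (Q # Ps)"
        using q(1) by simp
      then have "prod_list (q # xs) \<in> P"
        using Cons.prems unfolding ideal_prod_subset_def by blast
      then have "q * prod_list xs \<in> P"
        by simp
      then show "prod_list xs \<in> P"
        using q(2) assms(1) unfolding is_prime_ideal_def by blast
    qed
    then show ?thesis using Cons.IH by auto
  qed auto
qed

lemma maximal_ideal_in_prime_product:
  assumes "is_maximal_ideal M" "ideal_prod_subset Ps M" "\<forall>P\<in>set Ps. is_maximal_ideal P"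
  shows "M \<in> set Ps"
proof -
  obtain Q where "Q \<in> set Ps" "Q \<subseteq> M"
    using prime_ideal_contains_factor[OF maximal_ideal_is_prime] assms(1,2) by blast
  have "is_ideal M" "M \<noteq> UNIV" "is_maximal_ideal Q"
    using assms(1,3) \<open>Q \<in> set Ps\<close> by (auto simp: is_maximal_ideal_def)
  then have "M = Q"
    using \<open>Q \<subseteq> M\<close> unfolding is_maximal_ideal_def by blast
  then show ?thesis
    using \<open>Q \<in> set Ps\<close> by simp
qed

lemma ideal_prod_subset_append:
  assumes "is_ideal J" "ideal_prod_subset Ps (ideal_insert a J)" "ideal_prod_subset Qs (ideal_insert b J)"
    and "a * b \<in> J"
  shows "ideal_prod_subset (Ps @ Qs) J"
  unfolding ideal_prod_subset_def
proof (intro allI impI)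
  fix xs assume "list_all2 (\<in>) xs (Ps @ Qs)"
  then obtain us vs where uv: "xs = us @ vs" "list_all2 (\<in>) us Ps" "list_all2 (\<in>) vs Qs"
    by (auto simp: list_all2_append2)
  have "prod_list us \<in> ideal_insert a J" "prod_list vs \<in> ideal_insert b J"
    using assms(2,3) uv(2,3) unfolding ideal_prod_subset_def by blast+
  then obtain j1 r1 j2 r2 where j: "prod_list us = j1 + a * r1" "prod_list vs = j2 + b * r2" "j1 \<in> J" "j2 \<in> J"
    by (metis ideal_insertE)
  have "prod_list xs = j1 * (j2 + b * r2) + j2 * (a * r1) + (a * b) * (r1 * r2)"
    using uv(1) j by (simp add: algebra_simps)
  also have "\<dots> \<in> J"
    using j(3,4) assms(4) by (simp add: ideal_add[OF assms(1)] ideal_mult_right[OF assms(1)])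
  finally show "prod_list xs \<in> J" .
qed

lemma contains_prime_product:
  assumes "noetherian_ring_cls TYPE('a::comm_ring_1)"
  shows "is_ideal (J::'a set) \<Longrightarrow> J \<noteq> {0} \<Longrightarrow>
    \<exists>Ps. (\<forall>P\<in>set Ps. is_prime_ideal P \<and> P \<noteq> {0}) \<and> ideal_prod_subset Ps J"
proof (induction J rule: wf_induct[OF wf_ideal_psupset[OF assms]])
  case (1 J)
  show ?case
  proof (cases "J = UNIV \<or> is_prime_ideal J")
    case True
    then show ?thesis
    proof
      assume "J = UNIV"
      then show ?thesis
        by (intro exI[of _ "[]"]) (simp add: ideal_prod_subset_def)
    next
      assume "is_prime_ideal J"
      then show ?thesis
        using 1(3) by (intro exI[of _ "[J]"]) (auto simp: ideal_prod_subset_def list_all2_Cons2)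
    qed
  next
    case False
    then obtain a b where ab: "a * b \<in> J" "a \<notin> J" "b \<notin> J"
      using False 1(2) unfolding is_prime_ideal_def by blast
    have "\<exists>Ps. (\<forall>P\<in>set Ps. is_prime_ideal P \<and> P \<noteq> {0}) \<and> ideal_prod_subset Ps (ideal_insert c J)"
      if "c \<notin> J" for c
    proof (rule 1(1)[rule_format])
      have "J \<subset> ideal_insert c J"
        using subset_ideal_insert[of J c] insert_in_ideal_insert[OF 1(2), of c] that
        by (metis psubsetI)
      then show "(ideal_insert c J, J) \<in> ideal_psupset"
        using 1(2) is_ideal_ideal_insert[OF 1(2)] by (simp add: ideal_psupset_def)
      show "is_ideal (ideal_insert c J)"
        using is_ideal_ideal_insert[OF 1(2)] .
      show "ideal_insert c J \<noteq> {0}"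
        using 1(3) subset_ideal_insert[of J c] ideal_0[OF 1(2)] by auto
    qed
    then obtain Ps Qs where
      "\<forall>P\<in>set Ps. is_prime_ideal P \<and> P \<noteq> {0}" "ideal_prod_subset Ps (ideal_insert a J)"
      "\<forall>P\<in>set Qs. is_prime_ideal P \<and> P \<noteq> {0}" "ideal_prod_subset Qs (ideal_insert b J)"
      using ab(2,3) by metis
    then show ?thesis
      using ideal_prod_subset_append[OF 1(2) _ _ ab(1)] by (intro exI[of _ "Ps @ Qs"]) auto
  qed
qed

lemma dedekind_contains_maximal_product:
  assumes "dedekind_domain TYPE('a::idom)" "is_ideal (J::'a set)" "J \<noteq> {0}"
  obtains Ps where "\<forall>P\<in>set Ps. is_maximal_ideal P" "ideal_prod_subset Ps J"
proof -
  have noeth: "noetherian_ring_cls TYPE('a)"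
    and max: "\<And>P::'a set. is_prime_ideal P \<and> P \<noteq> {0} \<Longrightarrow> is_maximal_ideal P"
    using assms(1) by (auto simp: dedekind_domain_def)
  obtain Ps where Ps: "\<forall>P\<in>set Ps. is_prime_ideal P \<and> P \<noteq> {0}" "ideal_prod_subset Ps J"
    using contains_prime_product[OF noeth assms(2,3)] by blast
  have "\<forall>P\<in>set Ps. is_maximal_ideal P"
    using Ps(1) max by auto
  then show ?thesis
    using Ps(2) by (rule that)
qed

section \<open>Fractional ideals\<close>

lemma frac_emb_add [simp]: "frac_emb (a + b) = frac_emb a + frac_emb b"
  by (simp add: frac_emb_def)

lemma frac_emb_mult [simp]: "frac_emb (a * b) = frac_emb a * frac_emb b"
  by (simp add: frac_emb_def)

lemma frac_emb_0 [simp]: "frac_emb 0 = 0"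
  by (simp add: frac_emb_def Zero_fract_def)

lemma frac_emb_1 [simp]: "frac_emb 1 = 1"
  by (simp add: frac_emb_def One_fract_def)

lemma frac_emb_minus [simp]: "frac_emb (- a) = - frac_emb a"
  by (simp add: frac_emb_def)

lemma frac_emb_diff [simp]: "frac_emb (a - b) = frac_emb a - frac_emb b"
  by (simp add: frac_emb_def)

lemma frac_emb_eq_iff [simp]: "frac_emb a = frac_emb b \<longleftrightarrow> a = b"
  by (simp add: frac_emb_def eq_fract)

lemma frac_emb_eq_0_iff [simp]: "frac_emb a = 0 \<longleftrightarrow> a = 0"
  using frac_emb_eq_iff[of a 0] by simp

lemma frac_emb_sum: "frac_emb (sum f A) = (\<Sum>x\<in>A. frac_emb (f x))"
  by (induction A rule: infinite_finite_induct) auto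

lemma frac_emb_inv_frac_emb: "x \<in> range frac_emb \<Longrightarrow> frac_emb (inv frac_emb x) = x"
  by (rule f_inv_into_f)

lemma sum_in_range_frac_emb:
  assumes "\<And>k. k \<in> A \<Longrightarrow> g k \<in> range frac_emb"
  shows "sum g A \<in> range frac_emb"
proof -
  have "sum g A = frac_emb (\<Sum>k\<in>A. inv frac_emb (g k))"
    using assms by (simp add: frac_emb_sum frac_emb_inv_frac_emb)
  then show ?thesis by simp
qed

lemma range_frac_emb_add: "x \<in> range frac_emb \<Longrightarrow> y \<in> range frac_emb \<Longrightarrow> x + y \<in> range frac_emb"
  by (auto simp flip: frac_emb_add)

lemma range_frac_emb_mult: "x \<in> range frac_emb \<Longrightarrow> y \<in> range frac_emb \<Longrightarrow> x * y \<in> range frac_emb"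
  by (auto simp flip: frac_emb_mult)

definition frac_submodule :: "'a::idom fract set \<Rightarrow> bool" where
  "frac_submodule M \<longleftrightarrow> 0 \<in> M \<and> (\<forall>x\<in>M. \<forall>y\<in>M. x + y \<in> M) \<and> (\<forall>r. \<forall>x\<in>M. frac_emb r * x \<in> M)"

lemma is_ideal_vimage_frac_emb: "frac_submodule M \<Longrightarrow> is_ideal (frac_emb -` M)"
  by (simp add: frac_submodule_def is_ideal_def)

lemma frac_submodule_linear_combinations:
  assumes "frac_submodule M"
  shows "frac_submodule {x * u + y * v | u v. u \<in> M \<and> v \<in> M}" (is "frac_submodule ?L")
  unfolding frac_submodule_def
proof (intro conjI ballI allI)
  have M: "0 \<in> M" "\<And>u v. u \<in> M \<Longrightarrow> v \<in> M \<Longrightarrow> u + v \<in> M"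
    "\<And>r u. u \<in> M \<Longrightarrow> frac_emb r * u \<in> M"
    using assms by (auto simp: frac_submodule_def)
  have comb: "x * u + y * v \<in> ?L" if "u \<in> M" "v \<in> M" for u v
    using that by blast
  show "0 \<in> ?L"
    using comb[OF M(1) M(1)] by simp
  fix p q assume "p \<in> ?L" "q \<in> ?L"
  then obtain u v u' v' where "p = x * u + y * v" "q = x * u' + y * v'"
    and uv: "u \<in> M" "v \<in> M" "u' \<in> M" "v' \<in> M"
    by auto
  then have "p + q = x * (u + u') + y * (v + v')"
    by (simp add: algebra_simps)
  then show "p + q \<in> ?L"
    using comb[OF M(2)[OF uv(1,3)] M(2)[OF uv(2,4)]] by simp
next
  have M: "\<And>r u. u \<in> M \<Longrightarrow> frac_emb r * u \<in> M"
    using assms by (auto simp: frac_submodule_def)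
  fix r p assume "p \<in> ?L"
  then obtain u v where "p = x * u + y * v" and uv: "u \<in> M" "v \<in> M"
    by auto
  then have "frac_emb r * p = x * (frac_emb r * u) + y * (frac_emb r * v)"
    by (simp add: algebra_simps)
  then show "frac_emb r * p \<in> ?L"
    using M[OF uv(1)] M[OF uv(2)] by blast
qed

lemma frac_submodule_ideal_inverse: "frac_submodule (ideal_inverse I)"
  unfolding frac_submodule_def ideal_inverse_def
proof (intro conjI ballI allI CollectI)
  fix x y i
  assume "x \<in> {x. \<forall>i\<in>I. x * frac_emb i \<in> range frac_emb}" "y \<in> {x. \<forall>i\<in>I. x * frac_emb i \<in> range frac_emb}"
    and "i \<in> I"
  then have "x * frac_emb i + y * frac_emb i \<in> range frac_emb"
    by (simp add: range_frac_emb_add)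
  then show "(x + y) * frac_emb i \<in> range frac_emb"
    by (simp add: distrib_right)
next
  fix r x i
  assume "x \<in> {x. \<forall>i\<in>I. x * frac_emb i \<in> range frac_emb}" and "i \<in> I"
  then have "frac_emb r * (x * frac_emb i) \<in> range frac_emb"
    by (simp add: range_frac_emb_mult)
  then show "frac_emb r * x * frac_emb i \<in> range frac_emb"
    by (simp add: mult.assoc)
qed (simp add: rangeI[of frac_emb 0, simplified])

lemma one_in_ideal_inverse: "1 \<in> ideal_inverse I"
  by (simp add: ideal_inverse_def)

lemma ideal_inverse_mult_in_range: "u \<in> ideal_inverse I \<Longrightarrow> x \<in> I \<Longrightarrow> frac_emb x * u \<in> range frac_emb"
  unfolding ideal_inverse_def by (auto simp: mult.commute)

lemma map_poly_frac_emb_add: "map_poly frac_emb (p + q) = map_poly frac_emb p + map_poly frac_emb q"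
  by (intro poly_eqI) (simp add: coeff_map_poly)

lemma map_poly_frac_emb_diff: "map_poly frac_emb (p - q) = map_poly frac_emb p - map_poly frac_emb q"
  by (intro poly_eqI) (simp add: coeff_map_poly)

lemma map_poly_frac_emb_sum: "map_poly frac_emb (sum f A) = (\<Sum>x\<in>A. map_poly frac_emb (f x))"
  by (induction A rule: infinite_finite_induct) (auto simp: map_poly_frac_emb_add)

lemma lead_coeff_monom_one_minus:
  fixes S :: "'a::comm_ring_1 poly"
  assumes "degree S < n"
  shows "lead_coeff (monom 1 n - S) = 1"
proof -
  have "coeff (monom 1 n - S) n = 1"
    using assms by (simp add: coeff_eq_0)
  moreover have "degree (monom 1 n - S) = n"
    using assms calculation by (intro antisym degree_diff_le le_degree) (auto simp: degree_monom_le)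
  ultimately show ?thesis
    by simp
qed

lemma frac_submodule_range_poly: "frac_submodule (range (\<lambda>p. w * poly (map_poly frac_emb p) z))"
  (is "frac_submodule (range ?ev)")
  unfolding frac_submodule_def
proof (intro conjI ballI allI)
  show "0 \<in> range ?ev"
    using rangeI[of ?ev 0] by simp
next
  fix x y assume "x \<in> range ?ev" "y \<in> range ?ev"
  then obtain p q where "x = ?ev p" "y = ?ev q" by blast
  then have "x + y = ?ev (p + q)"
    by (simp add: map_poly_frac_emb_add algebra_simps)
  then show "x + y \<in> range ?ev"
    by (rule image_eqI) simp
next
  fix r x assume "x \<in> range ?ev"
  then obtain p where "x = ?ev p" by blast
  then have "frac_emb r * x = ?ev (smult r p)"
    by (simp add: map_poly_smult algebra_simps)
  then show "frac_emb r * x \<in> range ?ev"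
    by (rule image_eqI) simp
qed

text \<open>In a Noetherian domain an almost integral element \<open>z\<close> (one with a common denominator \<open>w\<close>
  for all its powers) is integral: \<open>w R[z]\<close> is a finitely generated ideal, so \<open>w z\<^sup>n\<close> is an
  \<open>R\<close>-combination of the \<open>w p(z)\<close> with \<open>deg p < n\<close>.\<close>

lemma almost_integral_in_range_frac_emb:
  fixes z w :: "'a::idom fract"
  assumes noeth: "noetherian_ring_cls TYPE('a)" and intcl: "integrally_closed TYPE('a)"
    and "w \<noteq> 0" and powers: "\<And>k. w * z ^ k \<in> range frac_emb"
  shows "z \<in> range frac_emb"
proof -
  define ev where "ev = (\<lambda>p. w * poly (map_poly frac_emb p) z)"
  have "frac_submodule (range ev)"
    unfolding ev_def by (rule frac_submodule_range_poly)
  then have "is_ideal (frac_emb -` range ev)"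
    by (rule is_ideal_vimage_frac_emb)
  then have "finitely_generated_ideal (frac_emb -` range ev)"
    using noeth unfolding noetherian_ring_cls_def by blast
  then obtain F where F: "finite F" "frac_emb -` range ev = {x. \<exists>c. x = (\<Sum>a\<in>F. c a * a)}"
    unfolding finitely_generated_ideal_def by blast
  have "\<forall>a\<in>F. \<exists>p. frac_emb a = ev p"
    using finitely_generated_ideal_generator[OF F(2,1)] by (simp add: image_iff)
  then obtain p where p: "\<forall>a\<in>F. frac_emb a = ev (p a)"
    by (rule bchoice[THEN exE])
  define n where "n = Suc (Max (insert 0 ((\<lambda>a. degree (p a)) ` F)))"
  obtain r where r: "frac_emb r = w * z ^ n"
    using powers[of n] by (auto elim!: rangeE)
  have "r \<in> frac_emb -` range ev"
    using r rangeI[of ev "monom 1 n"] by (simp add: ev_def map_poly_monom poly_monom)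
  then obtain c where c: "r = (\<Sum>a\<in>F. c a * a)"
    using F(2) by blast
  define S where "S = (\<Sum>a\<in>F. smult (c a) (p a))"
  have "degree S < n"
  proof -
    have "degree S \<le> Max (insert 0 ((\<lambda>a. degree (p a)) ` F))"
      unfolding S_def using F(1)
      by (intro degree_sum_le) (auto intro: order.trans[OF degree_smult_le])
    then show ?thesis
      by (simp add: n_def)
  qed
  have "w * z ^ n = (\<Sum>a\<in>F. frac_emb (c a) * ev (p a))"
    using p by (simp flip: r add: c frac_emb_sum)
  also have "\<dots> = ev S"
    by (simp add: S_def ev_def map_poly_frac_emb_sum poly_sum map_poly_smult sum_distrib_left algebra_simps)
  finally have "poly (map_poly frac_emb (monom 1 n - S)) z = 0"
    using \<open>w \<noteq> 0\<close> by (simp add: ev_def map_poly_frac_emb_diff map_poly_monom poly_monom)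
  then show ?thesis
    using intcl lead_coeff_monom_one_minus[OF \<open>degree S < n\<close>]
    unfolding integrally_closed_def by blast
qed

section \<open>Invertible ideals in a Dedekind domain\<close>

lemma ideal_prod_subset_remove_factor:
  assumes "ideal_prod_subset (Ps1 @ M # Ps2) K" "\<not> ideal_prod_subset (Ps1 @ Ps2) K"
  obtains b where "b \<notin> K" "\<And>j. j \<in> M \<Longrightarrow> j * b \<in> K"
proof -
  obtain xs where xs: "list_all2 (\<in>) xs (Ps1 @ Ps2)" "prod_list xs \<notin> K"
    using assms(2) unfolding ideal_prod_subset_def by blast
  then obtain us vs where uv: "xs = us @ vs" "list_all2 (\<in>) us Ps1" "list_all2 (\<in>) vs Ps2"
    by (auto simp: list_all2_append2)
  have "j * prod_list xs \<in> K" if "j \<in> M" for j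
  proof -
    have "list_all2 (\<in>) (us @ j # vs) (Ps1 @ M # Ps2)"
      using uv(2,3) that by (simp add: list_all2_appendI)
    then have "prod_list (us @ j # vs) \<in> K"
      using assms(1) unfolding ideal_prod_subset_def by blast
    then show ?thesis
      using uv(1) by (simp add: algebra_simps)
  qed
  then show ?thesis
    by (rule that[OF xs(2)])
qed

text \<open>The ideal quotient \<open>(K : M)\<close> is strictly larger than \<open>K\<close>: take a shortest product of
  maximal ideals inside \<open>K\<close>; \<open>M\<close> is one of the factors, and dropping it leaves a product that
  is no longer inside \<open>K\<close>.\<close>

lemma ideal_quotient_maximal_not_subset:
  assumes ded: "dedekind_domain TYPE('a::idom)" and K: "is_ideal (K::'a set)" "K \<noteq> {0}"
    and M: "is_maximal_ideal M" "K \<subseteq> M"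
  obtains b where "b \<notin> K" "\<And>j. j \<in> M \<Longrightarrow> j * b \<in> K"
proof -
  define good where
    "good Ps \<longleftrightarrow> (\<forall>P\<in>set Ps. is_maximal_ideal P) \<and> ideal_prod_subset Ps K" for Ps
  obtain Ps0 where "good Ps0"
    using dedekind_contains_maximal_product[OF ded K] unfolding good_def by metis
  then obtain Ps where "good Ps" and shortest: "\<And>Qs. good Qs \<Longrightarrow> length Ps \<le> length Qs"
    using ex_has_least_nat[of good Ps0 length] by blast
  then have Ps: "\<forall>P\<in>set Ps. is_maximal_ideal P" "ideal_prod_subset Ps K"
    by (simp_all add: good_def)
  have "M \<in> set Ps"
    using maximal_ideal_in_prime_product[OF M(1) ideal_prod_subset_mono[OF Ps(2) M(2)] Ps(1)] .
  then obtain Ps1 Ps2 where split: "Ps = Ps1 @ M # Ps2"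
    by (meson split_list)
  have "\<not> ideal_prod_subset (Ps1 @ Ps2) K"
  proof
    assume "ideal_prod_subset (Ps1 @ Ps2) K"
    moreover have "\<forall>P\<in>set (Ps1 @ Ps2). is_maximal_ideal P"
      using Ps(1) split by simp
    ultimately have "length Ps \<le> length (Ps1 @ Ps2)"
      by (intro shortest) (simp add: good_def)
    then show False
      using split by simp
  qed
  then obtain b where "b \<notin> K" "\<And>j. j \<in> M \<Longrightarrow> j * b \<in> K"
    using ideal_prod_subset_remove_factor[of Ps1 M Ps2 K] Ps(2) split by blast
  then show ?thesis
    by (rule that)
qed

lemma ideal_inverse_not_subset_range:
  assumes ded: "dedekind_domain TYPE('a::idom)"
    and J: "is_ideal (J::'a set)" "J \<noteq> {0}" "J \<noteq> UNIV"
  obtains z where "z \<in> ideal_inverse J" "z \<notin> range frac_emb"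
proof -
  have noeth: "noetherian_ring_cls TYPE('a)"
    using ded by (simp add: dedekind_domain_def)
  obtain a where a: "a \<in> J" "a \<noteq> 0"
    using J(1,2) ideal_0 by blast
  define aR where "aR = ideal_insert a {0}"
  have "a \<in> aR"
    using insert_in_ideal_insert[OF is_ideal_singleton_0] by (simp add: aR_def)
  moreover have "aR \<subseteq> J"
    using ideal_mult_right[OF J(1) a(1)] by (auto simp: aR_def elim!: ideal_insertE)
  ultimately have aR: "is_ideal aR" "aR \<noteq> {0}" "aR \<subseteq> J"
    using is_ideal_ideal_insert[OF is_ideal_singleton_0] a(2) by (auto simp: aR_def)
  obtain M where M: "is_maximal_ideal M" "J \<subseteq> M"
    using exists_maximal_ideal[OF noeth J(1,3)] by blast
  obtain b where b: "b \<notin> aR" "\<And>j. j \<in> M \<Longrightarrow> j * b \<in> aR"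
    using ideal_quotient_maximal_not_subset[OF ded aR(1,2) M(1) order.trans[OF aR(3) M(2)]] by blast
  define z where "z = frac_emb b / frac_emb a"
  have "z * frac_emb j \<in> range frac_emb" if "j \<in> J" for j
  proof -
    have "j * b \<in> aR"
      using b(2)[OF subsetD[OF M(2) that]] .
    then have "\<exists>r. j * b = a * r"
      by (auto simp: aR_def elim!: ideal_insertE)
    then obtain r where "j * b = a * r" ..
    then show ?thesis
      using a(2) by (auto simp: z_def field_simps simp flip: frac_emb_mult)
  qed
  moreover have "z \<notin> range frac_emb"
  proof
    assume "z \<in> range frac_emb"
    then obtain r where "frac_emb b = frac_emb a * frac_emb r"
      using a(2) by (auto simp: z_def field_simps)
    then have "b = 0 + a * r"
      by (simp flip: frac_emb_mult)
    then show False
      using b(1) ideal_insertI[of 0 "{0}" a r] by (simp add: aR_def)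
  qed
  ultimately show ?thesis
    by (intro that) (simp_all add: ideal_inverse_def)
qed

text \<open>If \<open>I I\<inverse> \<subseteq> K\<close> for a proper ideal \<open>K\<close>, then \<open>K\<inverse>\<close> contains some \<open>z \<notin> R\<close> with
  \<open>z I\<inverse> \<subseteq> I\<inverse>\<close>, so all powers of \<open>z\<close> have a common denominator and \<open>z\<close> would be integral.\<close>

lemma ideal_mult_inverse_not_subset:
  assumes ded: "dedekind_domain TYPE('a::idom)"
    and I: "is_ideal (I::'a set)" "I \<noteq> {0}" and K: "is_ideal K" "K \<noteq> UNIV"
  shows "\<exists>x\<in>I. \<exists>u\<in>ideal_inverse I. frac_emb x * u \<notin> frac_emb ` K"
proof (rule ccontr)
  assume "\<not> ?thesis"
  then have prod: "frac_emb x * u \<in> frac_emb ` K" if "x \<in> I" "u \<in> ideal_inverse I" for x u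
    using that by blast
  obtain a where a: "a \<in> I" "a \<noteq> 0"
    using I ideal_0 by blast
  have "a \<in> K"
    using prod[OF a(1) one_in_ideal_inverse] by auto
  then have "K \<noteq> {0}"
    using a(2) by auto
  then obtain z where z: "z \<in> ideal_inverse K" "z \<notin> range frac_emb"
    using ideal_inverse_not_subset_range[OF ded K(1) _ K(2)] by blast
  have "z * u \<in> ideal_inverse I" if u: "u \<in> ideal_inverse I" for u
    unfolding ideal_inverse_def
  proof (intro CollectI ballI)
    fix i assume "i \<in> I"
    then obtain r where "r \<in> K" "frac_emb i * u = frac_emb r"
      using prod[OF _ u] by blast
    have "z * u * frac_emb i = z * (frac_emb i * u)"
      by (simp add: ac_simps)
    also have "\<dots> = z * frac_emb r"
      by (simp add: \<open>frac_emb i * u = frac_emb r\<close>)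
    also have "\<dots> \<in> range frac_emb"
      using z(1) \<open>r \<in> K\<close> unfolding ideal_inverse_def by blast
    finally show "z * u * frac_emb i \<in> range frac_emb" .
  qed
  then have "z ^ k \<in> ideal_inverse I" for k
    by (induction k) (simp_all add: one_in_ideal_inverse)
  then have "frac_emb a * z ^ k \<in> range frac_emb" for k
    using ideal_inverse_mult_in_range a(1) by blast
  then have "z \<in> range frac_emb"
    using almost_integral_in_range_frac_emb[of "frac_emb a" z] ded a(2)
    by (simp add: dedekind_domain_def)
  with z(2) show False ..
qed

lemma prime_ideal_prod_notin:
  assumes "is_prime_ideal P" "finite A" "\<forall>x\<in>A. f x \<notin> P"
  shows "prod f A \<notin> P"
  using assms(2,3)
proof (induction A rule: finite_induct)
  case empty
  then show ?case
    using assms(1) ideal_eq_UNIV_iff[of P] by (simp add: is_prime_ideal_def)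
next
  case (insert x F)
  then show ?case
    using assms(1) unfolding is_prime_ideal_def by auto
qed

lemma maximal_ideals_separating_element:
  assumes "finite S" "\<forall>Q\<in>S. is_maximal_ideal Q" "Q \<in> S"
  shows "\<exists>e. e \<notin> Q \<and> (\<forall>Q'\<in>S - {Q}. e \<in> Q')"
proof -
  have Q: "is_prime_ideal Q"
    using assms(2,3) maximal_ideal_is_prime by blast
  have "\<exists>t. t \<in> Q' \<and> t \<notin> Q" if "Q' \<in> S - {Q}" for Q'
  proof (rule ccontr)
    assume "\<not> ?thesis"
    then have "Q' \<subseteq> Q"
      by blast
    moreover have "is_maximal_ideal Q'" "is_ideal Q" "Q \<noteq> UNIV"
      using assms(2,3) that by (auto simp: is_maximal_ideal_def)
    ultimately show False
      using that unfolding is_maximal_ideal_def by blast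
  qed
  then obtain t where t: "\<And>Q'. Q' \<in> S - {Q} \<Longrightarrow> t Q' \<in> Q' \<and> t Q' \<notin> Q"
    by metis
  have "prod t (S - {Q}) \<notin> Q"
    using t assms(1) by (intro prime_ideal_prod_notin[OF Q]) auto
  moreover have "prod t (S - {Q}) \<in> Q'" if Q': "Q' \<in> S - {Q}" for Q'
  proof -
    have "prod t (S - {Q}) = t Q' * prod t (S - {Q} - {Q'})"
      using assms(1) Q' by (intro prod.remove) auto
    then show ?thesis
      using t[OF Q'] ideal_mult_right assms(2) Q' by (auto simp: is_maximal_ideal_def)
  qed
  ultimately show ?thesis
    by blast
qed

text \<open>A prime-avoidance argument: glue the local witnesses \<open>x\<^sub>Q\<close> with separating elements
  \<open>e\<^sub>Q\<close> into \<open>b = \<Sum>\<^sub>Q e\<^sub>Q x\<^sub>Q\<close>; modulo \<open>Q\<close> only the summand of \<open>Q\<close> survives.\<close>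

lemma ideal_element_avoiding_maximal_ideals:
  assumes I: "is_ideal I" and S: "finite S" "\<forall>Q\<in>S. is_maximal_ideal Q"
    and local: "\<And>Q. Q \<in> S \<Longrightarrow> \<exists>x\<in>I. \<exists>u\<in>ideal_inverse I. frac_emb x * u \<notin> frac_emb ` Q"
  obtains b where "b \<in> I" "\<And>Q. Q \<in> S \<Longrightarrow> \<exists>u\<in>ideal_inverse I. frac_emb b * u \<notin> frac_emb ` Q"
proof -
  obtain x u where xu: "\<And>Q. Q \<in> S \<Longrightarrow> x Q \<in> I \<and> u Q \<in> ideal_inverse I \<and> frac_emb (x Q) * u Q \<notin> frac_emb ` Q"
    using local by metis
  have "\<forall>Q\<in>S. \<exists>e. e \<notin> Q \<and> (\<forall>Q'\<in>S - {Q}. e \<in> Q')"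
    using maximal_ideals_separating_element[OF S] by blast
  then obtain e where e: "\<forall>Q\<in>S. e Q \<notin> Q \<and> (\<forall>Q'\<in>S - {Q}. e Q \<in> Q')"
    by (rule bchoice[THEN exE])
  define b where "b = (\<Sum>Q\<in>S. e Q * x Q)"
  have "frac_emb b * u Q \<notin> frac_emb ` Q" if Q: "Q \<in> S" for Q
  proof
    have prime: "is_prime_ideal Q"
      using S(2) Q maximal_ideal_is_prime by blast
    then have ideal: "is_ideal Q"
      by (simp add: is_prime_ideal_def)
    define s where "s Q' = inv frac_emb (frac_emb (x Q') * u Q)" for Q'
    have s: "frac_emb (s Q') = frac_emb (x Q') * u Q" if "Q' \<in> S" for Q'
      unfolding s_def using xu[OF that] xu[OF Q]
      by (intro frac_emb_inv_frac_emb ideal_inverse_mult_in_range) auto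
    have "frac_emb b * u Q = (\<Sum>Q'\<in>S. frac_emb (e Q') * (frac_emb (x Q') * u Q))"
      by (simp add: b_def frac_emb_sum sum_distrib_right mult.assoc)
    also have "\<dots> = frac_emb (\<Sum>Q'\<in>S. e Q' * s Q')"
      using s by (simp add: frac_emb_sum)
    finally have "frac_emb b * u Q = frac_emb (e Q * s Q + (\<Sum>Q'\<in>S - {Q}. e Q' * s Q'))"
      using S(1) Q by (simp add: sum.remove)
    moreover assume "frac_emb b * u Q \<in> frac_emb ` Q"
    ultimately have "e Q * s Q + (\<Sum>Q'\<in>S - {Q}. e Q' * s Q') \<in> Q"
      by (auto simp del: frac_emb_add frac_emb_mult)
    moreover have "(\<Sum>Q'\<in>S - {Q}. e Q' * s Q') \<in> Q"
      using e Q by (intro ideal_sum[OF ideal] ideal_mult_right[OF ideal]) auto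
    ultimately have "e Q * s Q \<in> Q"
      by (rule ideal_add_left_cancel[OF ideal])
    moreover have "s Q \<notin> Q"
      using xu[OF Q] s[OF Q] by (metis image_eqI)
    ultimately show False
      using e Q prime unfolding is_prime_ideal_def by blast
  qed
  moreover have "b \<in> I"
    unfolding b_def using xu by (intro ideal_sum[OF I] ideal_mult_left[OF I]) auto
  ultimately show ?thesis
    using that xu by blast
qed

text \<open>The nonzero ideal \<open>K 0 = a I\<inverse>\<close> lies in only finitely many maximal ideals, and \<open>b\<close> is
  chosen so that \<open>K b = a I\<inverse> + b I\<inverse>\<close> lies in none of them.\<close>

lemma dedekind_ideal_second_generator:
  assumes ded: "dedekind_domain TYPE('a::idom)" and I: "is_ideal (I::'a set)"
    and a: "a \<in> I" "a \<noteq> 0"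
  obtains b u v where "b \<in> I" "u \<in> ideal_inverse I" "v \<in> ideal_inverse I"
    "frac_emb a * u + frac_emb b * v = 1"
proof -
  have noeth: "noetherian_ring_cls TYPE('a)"
    using ded by (simp add: dedekind_domain_def)
  define K where "K c = frac_emb -` {frac_emb a * u + frac_emb c * v | u v. u \<in> ideal_inverse I \<and> v \<in> ideal_inverse I}"
    for c
  have K: "is_ideal (K c)" for c
    unfolding K_def
    by (intro is_ideal_vimage_frac_emb frac_submodule_linear_combinations frac_submodule_ideal_inverse)
  have K_mono: "K 0 \<subseteq> K c" for c
    unfolding K_def using frac_submodule_ideal_inverse[of I] by (force simp: frac_submodule_def)
  have "a \<in> K 0"
    unfolding K_def using frac_submodule_ideal_inverse[of I] one_in_ideal_inverse[of I]
    by (force simp: frac_submodule_def)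
  then have "K 0 \<noteq> {0}"
    using a(2) by blast
  then obtain Ps where Ps: "\<forall>P\<in>set Ps. is_maximal_ideal P" "ideal_prod_subset Ps (K 0)"
    using dedekind_contains_maximal_product[OF ded K] by blast
  have "\<exists>x\<in>I. \<exists>u\<in>ideal_inverse I. frac_emb x * u \<notin> frac_emb ` Q" if "Q \<in> set Ps" for Q
    using Ps(1) that a ideal_mult_inverse_not_subset[OF ded I, of Q]
    by (auto simp: is_maximal_ideal_def)
  then obtain b where b: "b \<in> I" "\<And>Q. Q \<in> set Ps \<Longrightarrow> \<exists>u\<in>ideal_inverse I. frac_emb b * u \<notin> frac_emb ` Q"
    using ideal_element_avoiding_maximal_ideals[OF I finite_set Ps(1)] by blast
  have "K b = UNIV"
  proof (rule ccontr)
    assume "K b \<noteq> UNIV"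
    then obtain M where M: "is_maximal_ideal M" "K b \<subseteq> M"
      using exists_maximal_ideal[OF noeth K] by blast
    then have "M \<in> set Ps"
      using maximal_ideal_in_prime_product[OF M(1) ideal_prod_subset_mono[OF Ps(2)] Ps(1)] K_mono
      by blast
    then obtain v where v: "v \<in> ideal_inverse I" "frac_emb b * v \<notin> frac_emb ` M"
      using b(2) by blast
    obtain r where r: "frac_emb r = frac_emb b * v"
      using ideal_inverse_mult_in_range[OF v(1) b(1)] by (metis rangeE)
    have "frac_emb r = frac_emb a * 0 + frac_emb b * v"
      using r by simp
    then have "r \<in> K b"
      unfolding K_def using v(1) frac_submodule_ideal_inverse[of I] by (force simp: frac_submodule_def)
    then show False
      using M(2) r v(2) by (metis image_eqI subsetD)
  qed
  then have "1 \<in> K b"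
    by simp
  then show ?thesis
    unfolding K_def using that b(1) by auto
qed

section \<open>\<open>Hom\<^sub>R(M\<^sub>2(R), I)\<close> as matrices over \<open>I\<close>\<close>

definition matrix_unit :: "'n \<Rightarrow> 'm \<Rightarrow> 'a::zero_neq_one^'m^'n" where
  "matrix_unit p q = (\<chi> i j. if i = p \<and> j = q then 1 else 0)"

lemma matrix_unit_mult_nth:
  fixes M :: "'a::semiring_1^'k^'m"
  shows "(matrix_unit p q ** M) $ i $ j = (if i = p then M $ q $ j else 0)"
  by (simp add: matrix_matrix_mult_def matrix_unit_def if_distrib if_distribR sum.delta cong: if_cong)

lemma trace_matrix_unit_mult:
  fixes M :: "'a::semiring_1^'n^'n"
  shows "trace (matrix_unit j i ** M) = M $ i $ j"
  by (simp add: trace_def matrix_unit_mult_nth if_distrib if_distribR)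

lemma matrix_decompose:
  "(\<Sum>i\<in>UNIV. \<Sum>j\<in>UNIV. mscale (x $ i $ j) (matrix_unit i j)) = (x::'a::comm_ring_1^2^2)"
  by (simp add: vec_eq_iff forall_2 sum_2 mscale_def matrix_unit_def)

text \<open>The transpose in \<open>hom_matrix\<close> makes \<open>f x = trace (x ** hom_matrix f)\<close>, which turns the
  action \<open>(a f) x = f (x a)\<close> into left multiplication by \<open>a\<close>.\<close>

definition hom_matrix :: "('a::comm_ring_1^'n^'n \<Rightarrow> 'a) \<Rightarrow> 'a^'n^'n" where
  "hom_matrix f = (\<chi> i j. f (matrix_unit j i))"

lemma hom_R_A_eq_trace:
  assumes f: "f \<in> hom_R_A I"
  shows "f x = trace (x ** hom_matrix f)"
proof -
  have add: "f (x + y) = f x + f y" and scale: "f (mscale r x) = r * f x" for x y r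
    using f by (simp_all add: hom_R_A_def)
  have zero: "f 0 = 0"
    using add[of 0 0] by simp
  have sum: "f (sum g A) = (\<Sum>a\<in>A. f (g a))" for g and A :: "'b set"
    by (induction A rule: infinite_finite_induct) (simp_all add: zero add)
  have "f x = f (\<Sum>i\<in>UNIV. \<Sum>j\<in>UNIV. mscale (x $ i $ j) (matrix_unit i j))"
    by (simp only: matrix_decompose)
  also have "\<dots> = (\<Sum>i\<in>UNIV. \<Sum>j\<in>UNIV. x $ i $ j * f (matrix_unit i j))"
    by (simp only: sum scale)
  also have "\<dots> = trace (x ** hom_matrix f)"
    by (simp add: trace_def matrix_matrix_mult_def hom_matrix_def)
  finally show ?thesis .
qed

lemma hom_matrix_hom_act:
  assumes "f \<in> hom_R_A I"
  shows "hom_matrix (hom_act a f) = a ** hom_matrix f"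
proof -
  have "hom_matrix (hom_act a f) $ i $ j = (a ** hom_matrix f) $ i $ j" for i j
  proof -
    have "hom_matrix (hom_act a f) $ i $ j = f (matrix_unit j i ** a)"
      by (simp add: hom_matrix_def hom_act_def)
    also have "\<dots> = trace ((matrix_unit j i ** a) ** hom_matrix f)"
      by (rule hom_R_A_eq_trace[OF assms])
    also have "\<dots> = (a ** hom_matrix f) $ i $ j"
      by (simp add: trace_matrix_unit_mult flip: matrix_mul_assoc)
    finally show ?thesis .
  qed
  then show ?thesis
    by (simp add: vec_eq_iff)
qed

lemma hom_matrix_add: "hom_matrix (\<lambda>x. f x + g x) = hom_matrix f + hom_matrix g"
  by (simp add: vec_eq_iff hom_matrix_def)

lemma hom_matrix_in_ideal: "f \<in> hom_R_A I \<Longrightarrow> hom_matrix f $ i $ j \<in> I"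
  by (simp add: hom_matrix_def hom_R_A_def)

lemma hom_matrix_inject:
  assumes "f \<in> hom_R_A I" "g \<in> hom_R_A I" "hom_matrix f = hom_matrix g"
  shows "f = g"
proof
  fix x
  show "f x = g x"
    using hom_R_A_eq_trace[OF assms(1), of x] hom_R_A_eq_trace[OF assms(2), of x] assms(3) by simp
qed

lemma trace_mult_in_hom_R_A:
  assumes "is_ideal I" "\<And>i j. F $ i $ j \<in> I"
  shows "(\<lambda>x. trace (x ** F)) \<in> hom_R_A I"
proof -
  have "trace ((x + y) ** F) = trace (x ** F) + trace (y ** F)" for x y
    by (simp add: trace_def matrix_matrix_mult_def sum.distrib distrib_right)
  moreover have "trace (mscale r x ** F) = r * trace (x ** F)" for r x
    by (simp add: trace_def matrix_matrix_mult_def mscale_def sum_distrib_left mult.assoc)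
  moreover have "trace (x ** F) \<in> I" for x
    unfolding trace_def matrix_matrix_mult_def
    by (simp add: ideal_sum[OF assms(1)] ideal_mult_left[OF assms(1) assms(2)])
  ultimately show ?thesis
    by (simp add: hom_R_A_def)
qed

lemma hom_matrix_trace_mult: "hom_matrix (\<lambda>x. trace (x ** F)) = F"
  by (simp add: vec_eq_iff hom_matrix_def trace_matrix_unit_mult)

lemma mscale_matrix_mult: "mscale r x ** a = mscale r (x ** a)"
  by (simp add: vec_eq_iff matrix_matrix_mult_def mscale_def sum_distrib_left mult.assoc)

lemma matrix_add_rdistrib: "(A + B) ** C = A ** C + B ** C"
  by (simp add: vec_eq_iff matrix_matrix_mult_def sum.distrib distrib_right)

lemma hom_R_A_add:
  assumes "is_ideal I" "f \<in> hom_R_A I" "g \<in> hom_R_A I"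
  shows "(\<lambda>x. f x + g x) \<in> hom_R_A I"
proof -
  have "f (x + y) = f x + f y" "g (x + y) = g x + g y" "f (mscale r x) = r * f x"
    "g (mscale r x) = r * g x" "f x \<in> I" "g x \<in> I" for x y r
    using assms(2,3) by (simp_all add: hom_R_A_def)
  then show ?thesis
    unfolding hom_R_A_def using ideal_add[OF assms(1)] by (simp add: algebra_simps)
qed

lemma hom_R_A_hom_act:
  assumes "f \<in> hom_R_A I"
  shows "hom_act a f \<in> hom_R_A I"
proof -
  have "f (x + y) = f x + f y" "f (mscale r x) = r * f x" "f x \<in> I" for x y r
    using assms by (simp_all add: hom_R_A_def)
  then show ?thesis
    by (simp add: hom_R_A_def hom_act_def matrix_add_rdistrib mscale_matrix_mult)
qed

lemma map_matrix_frac_emb_mult: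
  "map_matrix frac_emb (X ** Y) = map_matrix frac_emb X ** map_matrix frac_emb Y"
  by (simp add: vec_eq_iff matrix_matrix_mult_def frac_emb_sum)

lemma map_matrix_frac_emb_add:
  "map_matrix frac_emb (X + Y) = map_matrix frac_emb X + map_matrix frac_emb Y"
  by (simp add: vec_eq_iff)

lemma map_matrix_frac_emb_inject: "map_matrix frac_emb X = map_matrix frac_emb Y \<Longrightarrow> X = Y"
  by (simp add: vec_eq_iff)

lemma map_matrix_frac_emb_inv:
  "(\<And>i j. Z $ i $ j \<in> range frac_emb) \<Longrightarrow> map_matrix frac_emb (map_matrix (inv frac_emb) Z) = Z"
  by (simp add: vec_eq_iff frac_emb_inv_frac_emb)

lemma hom_iso_regular_if_inverse_matrices:
  fixes G :: "'a::idom^2^2" and H :: "'a fract^2^2"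
  assumes I: "is_ideal I" and G: "\<And>i j. G $ i $ j \<in> I" and H: "\<And>i j. H $ i $ j \<in> ideal_inverse I"
    and GH: "map_matrix frac_emb G ** H = mat 1"
  shows "hom_iso_regular I"
proof -
  let ?emb = "map_matrix frac_emb"
  have HG: "H ** ?emb G = mat 1"
    using GH matrix_left_right_inverse by blast
  define \<Phi> where "\<Phi> f = map_matrix (inv frac_emb) (?emb (hom_matrix f) ** H)" for f
  have emb_\<Phi>: "?emb (\<Phi> f) = ?emb (hom_matrix f) ** H" if "f \<in> hom_R_A I" for f
    unfolding \<Phi>_def
    using ideal_inverse_mult_in_range[OF H hom_matrix_in_ideal[OF that]]
    by (intro map_matrix_frac_emb_inv) (simp add: matrix_matrix_mult_def sum_in_range_frac_emb)
  have "inj_on \<Phi> (hom_R_A I)"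
  proof (rule inj_onI)
    fix f g assume f: "f \<in> hom_R_A I" and g: "g \<in> hom_R_A I" and "\<Phi> f = \<Phi> g"
    then have "?emb (hom_matrix f) ** H = ?emb (hom_matrix g) ** H"
      using emb_\<Phi>[OF f] emb_\<Phi>[OF g] by simp
    then have "?emb (hom_matrix f) ** H ** ?emb G = ?emb (hom_matrix g) ** H ** ?emb G"
      by simp
    then have "hom_matrix f = hom_matrix g"
      by (simp add: HG flip: matrix_mul_assoc) (rule map_matrix_frac_emb_inject)
    then show "f = g"
      by (rule hom_matrix_inject[OF f g])
  qed
  moreover have "X \<in> \<Phi> ` hom_R_A I" for X
  proof -
    have XG: "(X ** G) $ i $ j \<in> I" for i j
      unfolding matrix_matrix_mult_def using G by (simp add: ideal_sum[OF I] ideal_mult_left[OF I])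
    have f: "(\<lambda>x. trace (x ** (X ** G))) \<in> hom_R_A I"
      by (rule trace_mult_in_hom_R_A[OF I XG])
    have "?emb (\<Phi> (\<lambda>x. trace (x ** (X ** G)))) = ?emb X"
      by (simp add: emb_\<Phi>[OF f] hom_matrix_trace_mult map_matrix_frac_emb_mult GH flip: matrix_mul_assoc)
    then have "X = \<Phi> (\<lambda>x. trace (x ** (X ** G)))"
      by (rule map_matrix_frac_emb_inject[symmetric])
    then show ?thesis
      using f by (rule image_eqI)
  qed
  moreover have "\<Phi> (\<lambda>x. f x + g x) = \<Phi> f + \<Phi> g" if f: "f \<in> hom_R_A I" and g: "g \<in> hom_R_A I" for f g
    by (rule map_matrix_frac_emb_inject)
      (simp only: emb_\<Phi> f g hom_R_A_add[OF I f g] hom_matrix_add map_matrix_frac_emb_add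
        matrix_add_rdistrib)
  moreover have "\<Phi> (hom_act a f) = a ** \<Phi> f" if f: "f \<in> hom_R_A I" for a f
    by (rule map_matrix_frac_emb_inject)
      (simp only: emb_\<Phi> f hom_R_A_hom_act[OF f] hom_matrix_hom_act[OF f] map_matrix_frac_emb_mult
        matrix_mul_assoc)
  ultimately show ?thesis
    unfolding hom_iso_regular_def bij_betw_def by (intro exI[of _ \<Phi>] conjI) auto
qed

lemma inverse_matrices_if_iso_ideal_inverse:
  assumes iso: "ideal_iso_frac I (ideal_inverse I)" and I: "is_ideal I"
    and ab: "a \<in> I" "b \<in> I" and u: "u1 \<in> ideal_inverse I" "u2 \<in> ideal_inverse I"
    and rel: "frac_emb a * u1 + frac_emb b * u2 = 1"
  obtains G :: "'a::idom^2^2" and H :: "'a fract^2^2"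
  where "\<And>i j. G $ i $ j \<in> I" "\<And>i j. H $ i $ j \<in> ideal_inverse I" "map_matrix frac_emb G ** H = mat 1"
proof -
  obtain \<phi> where \<phi>: "bij_betw \<phi> I (ideal_inverse I)" "\<And>r x. x \<in> I \<Longrightarrow> \<phi> (r * x) = frac_emb r * \<phi> x"
    using iso unfolding ideal_iso_frac_def by blast
  have swap: "frac_emb x * \<phi> y = frac_emb y * \<phi> x" if "x \<in> I" "y \<in> I" for x y
    using \<phi>(2)[OF that(1), of y] \<phi>(2)[OF that(2), of x] by (simp add: mult.commute)
  have "u1 \<in> \<phi> ` I" "u2 \<in> \<phi> ` I"
    using u \<phi>(1) by (simp_all add: bij_betw_def)
  then obtain y1 y2 where y: "y1 \<in> I" "y2 \<in> I" "\<phi> y1 = u1" "\<phi> y2 = u2"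
    by (metis imageE)
  have \<phi>_inv: "\<phi> x \<in> ideal_inverse I" if "x \<in> I" for x
    using bij_betwE[OF \<phi>(1)] that by blast
  have neg_\<phi>_inv: "- \<phi> x \<in> ideal_inverse I" if "x \<in> I" for x
  proof -
    have "frac_emb (- 1) * \<phi> x \<in> ideal_inverse I"
      using frac_submodule_ideal_inverse[of I] \<phi>_inv[OF that] unfolding frac_submodule_def by blast
    then show ?thesis
      by simp
  qed
  define G :: "'a^2^2" where "G = vector [vector [a, b], vector [- y2, y1]]"
  define H :: "'a fract^2^2" where "H = vector [vector [u1, - \<phi> b], vector [u2, \<phi> a]]"
  have "\<forall>i j. G $ i $ j \<in> I"
    using ab y(1,2) ideal_uminus[OF I y(2)] by (simp add: forall_2 G_def)
  moreover have "\<forall>i j. H $ i $ j \<in> ideal_inverse I"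
    using u \<phi>_inv[OF ab(1)] neg_\<phi>_inv[OF ab(2)] by (simp add: forall_2 H_def)
  moreover have "map_matrix frac_emb G ** H = mat 1"
  proof -
    have "frac_emb a * \<phi> b = frac_emb b * \<phi> a" "frac_emb y2 * u1 = frac_emb y1 * u2"
      "frac_emb y1 * \<phi> a + frac_emb y2 * \<phi> b = 1"
      using swap[OF ab] swap[OF y(2,1)] swap[OF y(1) ab(1)] swap[OF y(2) ab(2)] rel y(3,4)
      by simp_all
    then show ?thesis
      by (simp add: vec_eq_iff forall_2 matrix_matrix_mult_def sum_2 mat_def G_def H_def rel)
  qed
  ultimately show ?thesis
    using that by blast
qed

theorem proposition2p2:
  fixes I :: "'a::idom set"
  assumes "dedekind_domain TYPE('a)"
    and "is_ideal I"
    and "\<not> principal_ideal I"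
    and "ideal_iso_frac I (ideal_inverse I)"
  shows "hom_iso_regular I"
proof -
  have "I \<noteq> {0}"
    using assms(3) unfolding principal_ideal_def by force
  then obtain a where a: "a \<in> I" "a \<noteq> 0"
    using ideal_0[OF assms(2)] by blast
  obtain b u1 u2 where b: "b \<in> I" "u1 \<in> ideal_inverse I" "u2 \<in> ideal_inverse I"
    "frac_emb a * u1 + frac_emb b * u2 = 1"
    using dedekind_ideal_second_generator[OF assms(1,2) a] .
  obtain G :: "'a^2^2" and H :: "'a fract^2^2" where "\<And>i j. G $ i $ j \<in> I" "\<And>i j. H $ i $ j \<in> ideal_inverse I"
    "map_matrix frac_emb G ** H = mat 1"
    using inverse_matrices_if_iso_ideal_inverse[OF assms(4,2) a(1) b] by blast
  then show ?thesis
    by (rule hom_iso_regular_if_inverse_matrices[OF assms(2)])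
qed

end
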